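(* For $D \in \mathbb{R}^{m\times n}$, $Q \in \mathbb{Z}^{m\times n}$ whose $j$th column stores the sorting of the $j$th column of $D$, and a sequence $(a_1,\ldots,a_p)$ with $a_k\in\{0,\ldots,n-1\}$, QuickLexSort$(D,Q,(a_1,\ldots,a_p))$ runs in time $O(mp)$ and space $O(mn)$.
   Context: "The $j$th column of $Q$ stores the sorting of the $j$th column of $D$" means $(Q_{0j},\ldots,Q_{m-1,j})$ is a permutation of $\{0,\ldots,m-1\}$ with $D_{Q_{0j},j} \le \cdots \le D_{Q_{m-1,j},j}$. The model is a unit-cost random access machine (entry access, comparison of reals, integer arithmetic in constant time); space includes the inputs $D$ and $Q$. QuickLexSortRefine$(D,Q,i,L)$: initialize integer arrays $\mathrm{IDval},\mathrm{IDvalInit},\mathrm{subID},\mathrm{newCount},\mathrm{numNewID}$ of length $m$ to zero. For $j=0,\ldots,m-1$: let $r := Q[j,i]$, $\ell := L[r]$; if $\mathrm{IDvalInit}[\ell]=0$, set $\mathrm{IDvalInit}[\ell]:=1$, $\mathrm{IDval}[\ell]:=D[r,i]$; otherwise if $\mathrm{IDval}[\ell]\neq D[r,i]$, set $\mathrm{IDval}[\ell]:=D[r,i]$ and increment $\mathrm{newCount}[\ell]$; then set $\mathrm{subID}[r]:=\mathrm{newCount}[\ell]$. Set $\mathrm{numNewID}[m-1]:=\sum_{j=0}^{m-2}\mathrm{newCount}[j]$ and for $j=m-2,\ldots,1$, $\mathrm{numNewID}[j]:=\mathrm{numNewID}[j+1]-\mathrm{newCount}[j]$. Return $L'$ with $L'[j]:=L[j]+\mathrm{numNewID}[L[j]]+\mathrm{subID}[j]$.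 QuickLexSort$(D,Q,(a_1,\ldots,a_p))$: set $L'$ to the zero vector of length $m$; for $k=1,\ldots,p$ in order, set $L' :=$ QuickLexSortRefine$(D,Q,a_k,L')$; return $L'$. *)

theory Defs
  imports Complex_Main
begin

text \<open>
Instrumented model of QuickLexSort on a unit-cost RAM.
Matrices are functions nat => nat => _ (row, column), used only at indices below the
dimensions m x n.  Every array access, comparison, arithmetic operation and array write
is charged one time unit (field qtime).  Memory is accounted in cells: the inputs D and Q
occupy 2mn cells; every array allocation of length k adds k live cells and its release
removes them; qpeak records the maximum number of simultaneously live cells.
\<close>

definition sorts_columns ::
  "nat \<Rightarrow> nat \<Rightarrow> (nat \<Rightarrow> nat \<Rightarrow> real) \<Rightarrow> (nat \<Rightarrow> nat \<Rightarrow> nat) \<Rightarrow> bool" where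
  "sorts_columns m n D Q \<longleftrightarrow>
     (\<forall>j<n. bij_betw (\<lambda>i. Q i j) {..<m} {..<m} \<and>
            (\<forall>i. i + 1 < m \<longrightarrow> D (Q i j) j \<le> D (Q (i + 1) j) j))"

record qst =
  IDval :: "nat \<Rightarrow> real"
  IDvalInit :: "nat \<Rightarrow> nat"
  subID :: "nat \<Rightarrow> nat"
  newCount :: "nat \<Rightarrow> nat"
  numNewID :: "nat \<Rightarrow> nat"
  outArr :: "nat \<Rightarrow> nat"
  acc :: nat
  qtime :: nat
  qlive :: nat
  qpeak :: nat

definition tick :: "nat \<Rightarrow> qst \<Rightarrow> qst" where
  "tick k s = s\<lparr>qtime := qtime s + k\<rparr>"

definition alloc :: "nat \<Rightarrow> qst \<Rightarrow> qst" where
  "alloc k s = s\<lparr>qlive := qlive s + k, qpeak := max (qpeak s) (qlive s + k)\<rparr>"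

definition free :: "nat \<Rightarrow> qst \<Rightarrow> qst" where
  "free k s = s\<lparr>qlive := qlive s - k\<rparr>"

definition qls_init :: "nat \<Rightarrow> qst \<Rightarrow> qst" where
  "qls_init m s = tick (6 * m) (alloc (6 * m)
      (s\<lparr>IDval := (\<lambda>_. 0), IDvalInit := (\<lambda>_. 0), subID := (\<lambda>_. 0),
         newCount := (\<lambda>_. 0), numNewID := (\<lambda>_. 0), outArr := (\<lambda>_. 0)\<rparr>))"

definition qls_step ::
  "(nat \<Rightarrow> nat \<Rightarrow> real) \<Rightarrow> (nat \<Rightarrow> nat \<Rightarrow> nat) \<Rightarrow> nat \<Rightarrow> (nat \<Rightarrow> nat) \<Rightarrow> nat \<Rightarrow> qst \<Rightarrow> qst" where
  "qls_step D Q i L j s =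
    (let r = Q j i; l = L r;
         s1 = (if IDvalInit s l = 0 then
                 tick 3 (s\<lparr>IDvalInit := (IDvalInit s)(l := 1), IDval := (IDval s)(l := D r i)\<rparr>)
               else if IDval s l \<noteq> D r i then
                 tick 7 (s\<lparr>IDval := (IDval s)(l := D r i),
                           newCount := (newCount s)(l := newCount s l + 1)\<rparr>)
               else tick 3 s)
     in tick 8 (s1\<lparr>subID := (subID s1)(r := newCount s1 l)\<rparr>))"

definition qls_refine ::
  "(nat \<Rightarrow> nat \<Rightarrow> real) \<Rightarrow> (nat \<Rightarrow> nat \<Rightarrow> nat) \<Rightarrow> nat \<Rightarrow> (nat \<Rightarrow> nat) \<Rightarrow> nat \<Rightarrow> qst
     \<Rightarrow> (nat \<Rightarrow> nat) \<times> qst" where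
  "qls_refine D Q i L m s =
    (let s0 = qls_init m s;
         s1 = fold (qls_step D Q i L) [0..<m] s0;
         s2 = fold (\<lambda>j s. tick 4 (s\<lparr>acc := acc s + newCount s j\<rparr>)) [0..<m - 1]
                   (tick 1 (s1\<lparr>acc := 0\<rparr>));
         s3 = tick 2 (s2\<lparr>numNewID := (numNewID s2)(m - 1 := acc s2)\<rparr>);
         s4 = fold (\<lambda>j s. tick 6 (s\<lparr>numNewID := (numNewID s)(j := numNewID s (j + 1) - newCount s j)\<rparr>))
                   (rev [1..<m - 1]) s3;
         s5 = fold (\<lambda>j s. tick 8 (s\<lparr>outArr := (outArr s)(j := L j + numNewID s (L j) + subID s j)\<rparr>))
                   [0..<m] s4;
         s6 = free (5 * m) s5
     in (outArr s6, s6))"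

definition qls_start :: "nat \<Rightarrow> nat \<Rightarrow> qst" where
  "qls_start m n = \<lparr>IDval = (\<lambda>_. 0), IDvalInit = (\<lambda>_. 0), subID = (\<lambda>_. 0),
       newCount = (\<lambda>_. 0), numNewID = (\<lambda>_. 0), outArr = (\<lambda>_. 0), acc = 0,
       qtime = 0, qlive = 2 * m * n, qpeak = 2 * m * n\<rparr>"

definition qls_run ::
  "nat \<Rightarrow> nat \<Rightarrow> (nat \<Rightarrow> nat \<Rightarrow> real) \<Rightarrow> (nat \<Rightarrow> nat \<Rightarrow> nat) \<Rightarrow> nat list \<Rightarrow> (nat \<Rightarrow> nat) \<times> qst" where
  "qls_run m n D Q a =
    fold (\<lambda>i (L, s). let (L', s') = qls_refine D Q i L m s in (L', free m s')) a
         ((\<lambda>_. 0), tick m (alloc m (qls_start m n)))"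

definition QLS_time :: "nat \<Rightarrow> nat \<Rightarrow> (nat \<Rightarrow> nat \<Rightarrow> real) \<Rightarrow> (nat \<Rightarrow> nat \<Rightarrow> nat) \<Rightarrow> nat list \<Rightarrow> nat" where
  "QLS_time m n D Q a = qtime (snd (qls_run m n D Q a))"

definition QLS_space :: "nat \<Rightarrow> nat \<Rightarrow> (nat \<Rightarrow> nat \<Rightarrow> real) \<Rightarrow> (nat \<Rightarrow> nat \<Rightarrow> nat) \<Rightarrow> nat list \<Rightarrow> nat" where
  "QLS_space m n D Q a = qpeak (snd (qls_run m n D Q a))"

end

theory Submission
  imports Defs
begin

text \<open>Each call of QuickLexSortRefine consists of a constant number of loops of length at most m,
  each iteration costing a constant number of steps, and it leaves exactly one array of length m
  (its output) allocated; releasing the previous label array restores the live memory.  Hence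
  every refinement costs O(m) time, the live memory stays at 2mn + m between refinements, and
  the peak is 2mn + 7m.  These bounds hold for arbitrary D and Q: the sorting hypothesis is
  needed for correctness, not for the cost.\<close>

lemma tick_resources [simp]:
  "qtime (tick k s) = qtime s + k" "qlive (tick k s) = qlive s" "qpeak (tick k s) = qpeak s"
  by (simp_all add: tick_def)

lemma alloc_resources [simp]:
  "qtime (alloc k s) = qtime s" "qlive (alloc k s) = qlive s + k"
  "qpeak (alloc k s) = max (qpeak s) (qlive s + k)"
  by (simp_all add: alloc_def)

lemma free_resources [simp]:
  "qtime (free k s) = qtime s" "qlive (free k s) = qlive s - k" "qpeak (free k s) = qpeak s"
  by (simp_all add: free_def)

lemma fold_preserves:
  assumes "\<And>x s. g (f x s) = g s"
  shows "g (fold f xs s) = g s"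
  by (rule fold_invariant[where P = "\<lambda>t. g t = g s" and Q = "\<lambda>_. True"]) (simp_all add: assms)

lemma fold_le_add_mult_length:
  fixes g :: "'s \<Rightarrow> nat"
  assumes "\<And>x s. g (f x s) \<le> g s + c"
  shows "g (fold f xs s) \<le> g s + c * length xs"
proof (induction xs arbitrary: s)
  case (Cons x xs)
  from Cons.IH[of "f x s"] assms[of x s] show ?case by simp
qed simp

lemma qls_step_resources:
  "qtime (qls_step D Q i L j s) \<le> qtime s + 15"
  "qlive (qls_step D Q i L j s) = qlive s"
  "qpeak (qls_step D Q i L j s) = qpeak s"
  by (simp_all add: qls_step_def Let_def)

lemma qls_refine_resources:
  assumes "1 \<le> m"
  shows "qtime (snd (qls_refine D Q i L m s)) \<le> qtime s + 42 * m"
    and "qlive (snd (qls_refine D Q i L m s)) = qlive s + m"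
    and "qpeak (snd (qls_refine D Q i L m s)) = max (qpeak s) (qlive s + 6 * m)"
proof -
  define s1 where "s1 = fold (qls_step D Q i L) [0..<m] (qls_init m s)"
  define s2 where "s2 = fold (\<lambda>j s. tick 4 (s\<lparr>acc := acc s + newCount s j\<rparr>)) [0..<m - 1]
                   (tick 1 (s1\<lparr>acc := 0\<rparr>))"
  define s3 where "s3 = tick 2 (s2\<lparr>numNewID := (numNewID s2)(m - 1 := acc s2)\<rparr>)"
  define s4 where "s4 = fold (\<lambda>j s. tick 6 (s\<lparr>numNewID := (numNewID s)(j := numNewID s (j + 1) - newCount s j)\<rparr>))
                   (rev [1..<m - 1]) s3"
  define s5 where "s5 = fold (\<lambda>j s. tick 8 (s\<lparr>outArr := (outArr s)(j := L j + numNewID s (L j) + subID s j)\<rparr>))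
                   [0..<m] s4"
  have result: "snd (qls_refine D Q i L m s) = free (5 * m) s5"
    unfolding qls_refine_def s1_def s2_def s3_def s4_def s5_def Let_def by simp
  have init: "qtime (qls_init m s) = qtime s + 6 * m" "qlive (qls_init m s) = qlive s + 6 * m"
    "qpeak (qls_init m s) = max (qpeak s) (qlive s + 6 * m)"
    by (simp_all add: qls_init_def)
  have time: "qtime s5 \<le> qtime s + 6 * m + 15 * m + 1 + 4 * (m - 1) + 2 + 6 * (m - 2) + 8 * m"
  proof -
    have "qtime s1 \<le> qtime s + 6 * m + 15 * m"
      unfolding s1_def
      by (rule order_trans[OF fold_le_add_mult_length[where c = 15]])
        (simp_all add: qls_step_resources init)
    moreover have "qtime s2 \<le> qtime s1 + 1 + 4 * (m - 1)"
      unfolding s2_def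
      by (rule order_trans[OF fold_le_add_mult_length[where c = 4]]) simp_all
    moreover have "qtime s4 \<le> qtime s2 + 2 + 6 * (m - 2)"
      unfolding s4_def s3_def
      by (rule order_trans[OF fold_le_add_mult_length[where c = 6]]) simp_all
    moreover have "qtime s5 \<le> qtime s4 + 8 * m"
      unfolding s5_def
      by (rule order_trans[OF fold_le_add_mult_length[where c = 8]]) simp_all
    ultimately show ?thesis by linarith
  qed
  have "qlive s5 = qlive (qls_init m s) \<and> qpeak s5 = qpeak (qls_init m s)"
    unfolding s5_def s4_def s3_def s2_def s1_def
    by (simp add: fold_preserves qls_step_resources)
  with result init time assms show
    "qtime (snd (qls_refine D Q i L m s)) \<le> qtime s + 42 * m"
    "qlive (snd (qls_refine D Q i L m s)) = qlive s + m"
    "qpeak (snd (qls_refine D Q i L m s)) = max (qpeak s) (qlive s + 6 * m)"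
    by simp_all
qed

definition qls_round ::
  "(nat \<Rightarrow> nat \<Rightarrow> real) \<Rightarrow> (nat \<Rightarrow> nat \<Rightarrow> nat) \<Rightarrow> nat \<Rightarrow> nat \<Rightarrow> (nat \<Rightarrow> nat) \<times> qst
     \<Rightarrow> (nat \<Rightarrow> nat) \<times> qst" where
  "qls_round D Q m = (\<lambda>i (L, s). let (L', s') = qls_refine D Q i L m s in (L', free m s'))"

lemma qls_run_eq_fold_round:
  "qls_run m n D Q a = fold (qls_round D Q m) a ((\<lambda>_. 0), tick m (alloc m (qls_start m n)))"
  unfolding qls_run_def qls_round_def ..

lemma qls_round_resources:
  assumes "1 \<le> m"
  shows "qtime (snd (qls_round D Q m i p)) \<le> qtime (snd p) + 42 * m"
    and "qlive (snd (qls_round D Q m i p)) = qlive (snd p)"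
    and "qpeak (snd (qls_round D Q m i p)) = max (qpeak (snd p)) (qlive (snd p) + 6 * m)"
  using qls_refine_resources[OF assms, of D Q i "fst p" "snd p"]
  by (simp_all add: qls_round_def split_beta)

lemma qls_rounds_resources:
  assumes "1 \<le> m"
  shows "qtime (snd (fold (qls_round D Q m) a p)) \<le> qtime (snd p) + 42 * m * length a"
    and "qpeak (snd (fold (qls_round D Q m) a p)) \<le> max (qpeak (snd p)) (qlive (snd p) + 6 * m)"
proof -
  show "qtime (snd (fold (qls_round D Q m) a p)) \<le> qtime (snd p) + 42 * m * length a"
    using fold_le_add_mult_length[of "qtime \<circ> snd" "qls_round D Q m" "42 * m" a p]
      qls_round_resources(1)[OF assms] by (simp add: mult.assoc)
  show "qpeak (snd (fold (qls_round D Q m) a p)) \<le> max (qpeak (snd p)) (qlive (snd p) + 6 * m)"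
    using fold_invariant[where Q = "\<lambda>_. True" and P = "\<lambda>q. qlive (snd q) = qlive (snd p)
        \<and> qpeak (snd q) \<le> max (qpeak (snd p)) (qlive (snd p) + 6 * m)" and f = "qls_round D Q m"]
    by (simp add: qls_round_resources[OF assms])
qed

theorem mainTheorem5:
  "\<exists>C::nat. \<forall>m n D Q a.
     1 \<le> m \<longrightarrow> 1 \<le> length a \<longrightarrow>
     sorts_columns m n D Q \<longrightarrow> (\<forall>k<length a. a ! k < n) \<longrightarrow>
     QLS_time m n D Q a \<le> C * m * length a \<and> QLS_space m n D Q a \<le> C * m * n"
proof (rule exI[of _ 43], intro allI impI conjI)
  fix m n D Q a
  assume m: "1 \<le> m" and a: "1 \<le> length (a::nat list)" and "sorts_columns m n D Q"
    and a_lt_n: "\<forall>k<length a. a ! k < n"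
  have n: "1 \<le> n" using a_lt_n a by fastforce
  define s where "s = tick m (alloc m (qls_start m n))"
  have s: "qtime s = m" "qlive s = 2 * m * n + m" "qpeak s = 2 * m * n + m"
    by (simp_all add: s_def qls_start_def)
  note rounds = qls_rounds_resources[OF m, of D Q a "((\<lambda>_. 0), s)"]
  have "QLS_time m n D Q a \<le> m + 42 * m * length a"
    using rounds(1) s by (simp add: QLS_time_def qls_run_eq_fold_round s_def)
  also have "\<dots> \<le> 43 * m * length a" using a by simp
  finally show "QLS_time m n D Q a \<le> 43 * m * length a" .
  have "QLS_space m n D Q a \<le> 2 * m * n + 7 * m"
    using rounds(2) s by (simp add: QLS_space_def qls_run_eq_fold_round s_def)
  also have "\<dots> \<le> 43 * m * n" using n by simp
  finally show "QLS_space m n D Q a \<le> 43 * m * n" .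
qed

end
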